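(* (i) If $(S,* )$ is a free LD-system, there is no binary operation $\circ$ on $S$ such that $(S,*,\circ)$ is an ALD-system. (ii) A free ALD-system does not satisfy the law $x\circ y = (x*y)\circ x$; in particular it is not an LD-monoid.
   Context: An LD-system is a set with a binary operation $*$ satisfying $x*(y*z)=(x*y)*(x*z)$ (LD). An ALD-system is a set with two binary operations $*,\circ$ satisfying (LD), $x*(y*z)=(x\circ y)*z$ (ALD$_1$) and $x*(y\circ z)=(x*y)\circ(x*z)$ (ALD$_2$). An LD-monoid is an ALD-system in which moreover $\circ$ is associative with a unit and $x\circ y=(x*y)\circ x$ holds. Free LD-systems and free ALD-systems are the free algebras (of some rank $n\ge1$) in the varieties defined by these laws. *)

theory Defs
  imports Main
begin

definition closed_op :: "'a set \<Rightarrow> ('a \<Rightarrow> 'a \<Rightarrow> 'a) \<Rightarrow> bool" where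
  "closed_op S f \<longleftrightarrow> (\<forall>x\<in>S. \<forall>y\<in>S. f x y \<in> S)"

definition is_LD_system :: "'a set \<Rightarrow> ('a \<Rightarrow> 'a \<Rightarrow> 'a) \<Rightarrow> bool" where
  "is_LD_system S st \<longleftrightarrow> closed_op S st \<and>
     (\<forall>x\<in>S. \<forall>y\<in>S. \<forall>z\<in>S. st x (st y z) = st (st x y) (st x z))"

definition is_ALD_system :: "'a set \<Rightarrow> ('a \<Rightarrow> 'a \<Rightarrow> 'a) \<Rightarrow> ('a \<Rightarrow> 'a \<Rightarrow> 'a) \<Rightarrow> bool" where
  "is_ALD_system S st ci \<longleftrightarrow> is_LD_system S st \<and> closed_op S ci \<and>
     (\<forall>x\<in>S. \<forall>y\<in>S. \<forall>z\<in>S. st x (st y z) = st (ci x y) z) \<and>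
     (\<forall>x\<in>S. \<forall>y\<in>S. \<forall>z\<in>S. st x (ci y z) = ci (st x y) (st x z))"

definition is_LD_monoid :: "'a set \<Rightarrow> ('a \<Rightarrow> 'a \<Rightarrow> 'a) \<Rightarrow> ('a \<Rightarrow> 'a \<Rightarrow> 'a) \<Rightarrow> bool" where
  "is_LD_monoid S st ci \<longleftrightarrow> is_ALD_system S st ci \<and>
     (\<forall>x\<in>S. \<forall>y\<in>S. \<forall>z\<in>S. ci (ci x y) z = ci x (ci y z)) \<and>
     (\<exists>e\<in>S. \<forall>x\<in>S. ci e x = x \<and> ci x e = x) \<and>
     (\<forall>x\<in>S. \<forall>y\<in>S. ci x y = ci (st x y) x)"

datatype ldterm = LVar nat | LOp ldterm ldterm

fun lvars :: "ldterm \<Rightarrow> nat set" where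
  "lvars (LVar i) = {i}"
| "lvars (LOp a b) = lvars a \<union> lvars b"

fun leval :: "(nat \<Rightarrow> 'a) \<Rightarrow> ('a \<Rightarrow> 'a \<Rightarrow> 'a) \<Rightarrow> ldterm \<Rightarrow> 'a" where
  "leval g st (LVar i) = g i"
| "leval g st (LOp a b) = st (leval g st a) (leval g st b)"

inductive ld_eq :: "ldterm \<Rightarrow> ldterm \<Rightarrow> bool" where
  ld_refl: "ld_eq t t"
| ld_sym: "ld_eq t u \<Longrightarrow> ld_eq u t"
| ld_trans: "ld_eq t u \<Longrightarrow> ld_eq u v \<Longrightarrow> ld_eq t v"
| ld_cong: "ld_eq a a' \<Longrightarrow> ld_eq b b' \<Longrightarrow> ld_eq (LOp a b) (LOp a' b')"
| ld_law: "ld_eq (LOp x (LOp y z)) (LOp (LOp x y) (LOp x z))"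

text \<open>(S,st) is a free LD-system of rank n: there are generators g 0, ..., g (n-1)
  in S such that evaluation induces a bijection from terms in n variables modulo
  LD-equivalence onto S (i.e. (S,st) is isomorphic to the free LD-system on n generators).\<close>
definition free_LD_system :: "nat \<Rightarrow> 'a set \<Rightarrow> ('a \<Rightarrow> 'a \<Rightarrow> 'a) \<Rightarrow> bool" where
  "free_LD_system n S st \<longleftrightarrow> n \<ge> 1 \<and> is_LD_system S st \<and>
     (\<exists>g. (\<forall>i<n. g i \<in> S) \<and>
          S = {leval g st t | t. lvars t \<subseteq> {..<n}} \<and>
          (\<forall>t u. lvars t \<subseteq> {..<n} \<longrightarrow> lvars u \<subseteq> {..<n} \<longrightarrow>
                 (leval g st t = leval g st u \<longleftrightarrow> ld_eq t u)))"

datatype aldterm = AVar nat | AStar aldterm aldterm | ACirc aldterm aldterm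

fun avars :: "aldterm \<Rightarrow> nat set" where
  "avars (AVar i) = {i}"
| "avars (AStar a b) = avars a \<union> avars b"
| "avars (ACirc a b) = avars a \<union> avars b"

fun aeval :: "(nat \<Rightarrow> 'a) \<Rightarrow> ('a \<Rightarrow> 'a \<Rightarrow> 'a) \<Rightarrow> ('a \<Rightarrow> 'a \<Rightarrow> 'a) \<Rightarrow> aldterm \<Rightarrow> 'a" where
  "aeval g st ci (AVar i) = g i"
| "aeval g st ci (AStar a b) = st (aeval g st ci a) (aeval g st ci b)"
| "aeval g st ci (ACirc a b) = ci (aeval g st ci a) (aeval g st ci b)"

inductive ald_eq :: "aldterm \<Rightarrow> aldterm \<Rightarrow> bool" where
  ald_refl: "ald_eq t t"
| ald_sym: "ald_eq t u \<Longrightarrow> ald_eq u t"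
| ald_trans: "ald_eq t u \<Longrightarrow> ald_eq u v \<Longrightarrow> ald_eq t v"
| ald_cong_star: "ald_eq a a' \<Longrightarrow> ald_eq b b' \<Longrightarrow> ald_eq (AStar a b) (AStar a' b')"
| ald_cong_circ: "ald_eq a a' \<Longrightarrow> ald_eq b b' \<Longrightarrow> ald_eq (ACirc a b) (ACirc a' b')"
| ald_LD: "ald_eq (AStar x (AStar y z)) (AStar (AStar x y) (AStar x z))"
| ald_ALD1: "ald_eq (AStar x (AStar y z)) (AStar (ACirc x y) z)"
| ald_ALD2: "ald_eq (AStar x (ACirc y z)) (ACirc (AStar x y) (AStar x z))"

definition free_ALD_system :: "nat \<Rightarrow> 'a set \<Rightarrow> ('a \<Rightarrow> 'a \<Rightarrow> 'a) \<Rightarrow> ('a \<Rightarrow> 'a \<Rightarrow> 'a) \<Rightarrow> bool" where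
  "free_ALD_system n S st ci \<longleftrightarrow> n \<ge> 1 \<and> is_ALD_system S st ci \<and>
     (\<exists>g. (\<forall>i<n. g i \<in> S) \<and>
          S = {aeval g st ci t | t. avars t \<subseteq> {..<n}} \<and>
          (\<forall>t u. avars t \<subseteq> {..<n} \<longrightarrow> avars u \<subseteq> {..<n} \<longrightarrow>
                 (aeval g st ci t = aeval g st ci u \<longleftrightarrow> ald_eq t u)))"

end

theory Submission
  imports Defs
begin

text \<open>Everything that holds in a free system holds in every model, so an identity between
  terms is refuted by a model in which it fails.
  (i) In an ALD-system x * (x * x) = (x \<circ> x) * x. In a free LD-system x \<circ> x is the
  value of some term t, so x * (x * x) would be LD-equivalent to t * x. But evaluating in
  the LD-system \<nat> with x * y = y + 1 measures the right spine of a term, which has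
  length 2 on the left and 1 on the right.
  (ii) On \<int>, x * y = y and x \<circ> y = 2x + y form an ALD-system in which
  x \<circ> y = (x * y) \<circ> x fails whenever x \<noteq> y; in the free ALD-system it therefore
  fails for x a generator and y = x \<circ> x.\<close>

lemma leval_closed:
  assumes "closed_op S st" and "range g \<subseteq> S"
  shows "leval g st t \<in> S"
  using assms by (induction t) (auto simp: closed_op_def)

lemma ld_eq_sound:
  assumes "ld_eq t u" and "is_LD_system S st" and "range g \<subseteq> S"
  shows "leval g st t = leval g st u"
  using assms
proof (induction rule: ld_eq.induct)
  case (ld_law x y z)
  then have "closed_op S st"
    and "\<forall>a\<in>S. \<forall>b\<in>S. \<forall>c\<in>S. st a (st b c) = st (st a b) (st a c)"
    unfolding is_LD_system_def by blast+
  with ld_law.prems show ?case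
    by (simp add: leval_closed)
qed simp_all

lemma aeval_closed:
  assumes "closed_op S st" and "closed_op S ci" and "range g \<subseteq> S"
  shows "aeval g st ci t \<in> S"
  using assms by (induction t) (auto simp: closed_op_def)

lemma ald_eq_sound:
  assumes "ald_eq t u" and "is_ALD_system S st ci" and "range g \<subseteq> S"
  shows "aeval g st ci t = aeval g st ci u"
  using assms
proof (induction rule: ald_eq.induct)
  case (ald_LD x y z)
  then have "closed_op S st" "closed_op S ci"
    and "\<forall>a\<in>S. \<forall>b\<in>S. \<forall>c\<in>S. st a (st b c) = st (st a b) (st a c)"
    unfolding is_ALD_system_def is_LD_system_def by blast+
  with ald_LD.prems show ?case
    by (simp add: aeval_closed)
next
  case (ald_ALD1 x y z)
  then have "closed_op S st" "closed_op S ci"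
    and "\<forall>a\<in>S. \<forall>b\<in>S. \<forall>c\<in>S. st a (st b c) = st (ci a b) c"
    unfolding is_ALD_system_def is_LD_system_def by blast+
  with ald_ALD1.prems show ?case
    by (simp add: aeval_closed)
next
  case (ald_ALD2 x y z)
  then have "closed_op S st" "closed_op S ci"
    and "\<forall>a\<in>S. \<forall>b\<in>S. \<forall>c\<in>S. st a (ci b c) = ci (st a b) (st a c)"
    unfolding is_ALD_system_def is_LD_system_def by blast+
  with ald_ALD2.prems show ?case
    by (simp add: aeval_closed)
qed simp_all

lemma free_LD_systemE:
  assumes "free_LD_system n S st"
  obtains g where "g 0 \<in> S"
    and "\<And>s. s \<in> S \<Longrightarrow> \<exists>t. lvars t \<subseteq> {..<n} \<and> s = leval g st t"
    and "\<And>t u. lvars t \<subseteq> {..<n} \<Longrightarrow> lvars u \<subseteq> {..<n} \<Longrightarrow>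
           leval g st t = leval g st u \<Longrightarrow> ld_eq t u"
    and "0 < n"
  using assms unfolding free_LD_system_def by fastforce

lemma free_ALD_systemE:
  assumes "free_ALD_system n S st ci"
  obtains g where "g 0 \<in> S"
    and "\<And>t. avars t \<subseteq> {..<n} \<Longrightarrow> aeval g st ci t \<in> S"
    and "\<And>t u. avars t \<subseteq> {..<n} \<Longrightarrow> avars u \<subseteq> {..<n} \<Longrightarrow>
           aeval g st ci t = aeval g st ci u \<Longrightarrow> ald_eq t u"
    and "0 < n"
  using assms unfolding free_ALD_system_def by fastforce

lemma is_LD_system_successor: "is_LD_system UNIV (\<lambda>_ y. Suc y)"
  by (simp add: is_LD_system_def closed_op_def)

lemma is_ALD_system_int_affine: "is_ALD_system UNIV (\<lambda>_ y. y) (\<lambda>x y. 2 * x + (y::int))"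
  by (simp add: is_ALD_system_def is_LD_system_def closed_op_def)

lemma free_LD_system_not_ALD_system:
  assumes "free_LD_system n S st"
  shows "\<not> is_ALD_system S st ci"
proof
  assume ald: "is_ALD_system S st ci"
  obtain g where x: "g 0 \<in> S"
    and onto: "\<And>s. s \<in> S \<Longrightarrow> \<exists>t. lvars t \<subseteq> {..<n} \<and> s = leval g st t"
    and free: "\<And>t u. lvars t \<subseteq> {..<n} \<Longrightarrow> lvars u \<subseteq> {..<n} \<Longrightarrow>
                 leval g st t = leval g st u \<Longrightarrow> ld_eq t u"
    and "0 < n"
    using free_LD_systemE[OF assms] by blast
  have "ci (g 0) (g 0) \<in> S"
    using ald x by (simp add: is_ALD_system_def closed_op_def)
  then obtain t where t: "lvars t \<subseteq> {..<n}" "ci (g 0) (g 0) = leval g st t"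
    using onto by blast
  have "st (g 0) (st (g 0) (g 0)) = st (ci (g 0) (g 0)) (g 0)"
    using ald x by (simp add: is_ALD_system_def)
  then have "ld_eq (LOp (LVar 0) (LOp (LVar 0) (LVar 0))) (LOp t (LVar 0))"
    using t \<open>0 < n\<close> by (intro free) auto
  from ld_eq_sound[OF this is_LD_system_successor, of "\<lambda>_. 0"] show False
    by simp
qed

lemma free_ALD_system_violates_LD_monoid_law:
  assumes "free_ALD_system n S st ci"
  shows "\<not> (\<forall>x\<in>S. \<forall>y\<in>S. ci x y = ci (st x y) x)"
proof
  assume law: "\<forall>x\<in>S. \<forall>y\<in>S. ci x y = ci (st x y) x"
  obtain g where x: "g 0 \<in> S"
    and closed: "\<And>t. avars t \<subseteq> {..<n} \<Longrightarrow> aeval g st ci t \<in> S"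
    and free: "\<And>t u. avars t \<subseteq> {..<n} \<Longrightarrow> avars u \<subseteq> {..<n} \<Longrightarrow>
                 aeval g st ci t = aeval g st ci u \<Longrightarrow> ald_eq t u"
    and "0 < n"
    using free_ALD_systemE[OF assms] by blast
  let ?x = "AVar 0" and ?y = "ACirc (AVar 0) (AVar 0)"
  have "aeval g st ci ?y \<in> S"
    using \<open>0 < n\<close> by (intro closed) simp
  then have "ci (g 0) (aeval g st ci ?y) = ci (st (g 0) (aeval g st ci ?y)) (g 0)"
    using law x by blast
  then have "aeval g st ci (ACirc ?x ?y) = aeval g st ci (ACirc (AStar ?x ?y) ?x)"
    by simp
  then have "ald_eq (ACirc ?x ?y) (ACirc (AStar ?x ?y) ?x)"
    using \<open>0 < n\<close> by (intro free) auto
  from ald_eq_sound[OF this is_ALD_system_int_affine, of "\<lambda>_. 1"] show False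
    by simp
qed

theorem proposition1p5:
  fixes n m :: nat
    and S :: "'a set" and st :: "'a \<Rightarrow> 'a \<Rightarrow> 'a"
    and T :: "'b set" and st' :: "'b \<Rightarrow> 'b \<Rightarrow> 'b" and ci' :: "'b \<Rightarrow> 'b \<Rightarrow> 'b"
  shows "(free_LD_system n S st \<longrightarrow> \<not> (\<exists>ci. is_ALD_system S st ci))
       \<and> (free_ALD_system m T st' ci' \<longrightarrow>
            \<not> (\<forall>x\<in>T. \<forall>y\<in>T. ci' x y = ci' (st' x y) x) \<and> \<not> is_LD_monoid T st' ci')"
  using free_LD_system_not_ALD_system free_ALD_system_violates_LD_monoid_law
  unfolding is_LD_monoid_def by blast

end
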